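(* Let $(\mathcal{P},d)$ be a tree metric given by the weighted tree $T$, and let $\alpha>0$. In the greedy-routing network creation game on $(\mathcal{P},d)$ with edge price $\alpha$, the profile $\mathbf{s}^T$ (every agent $u$ builds edges exactly to its neighbours in $T$) is the unique Greedy Equilibrium. Consequently it is also the unique Nash equilibrium.
   Context: A tree metric on a finite set $\mathcal{P}$ is given by a spanning tree $T$ on $\mathcal{P}$ with positive edge weights, $d(x,y)=d_T(x,y)$ being the weight of the unique $x$–$y$ path in $T$. Game: agents are the points of $\mathcal{P}$; agent $u$'s strategy is $S_u\subseteq\mathcal{P}\setminus\{u\}$; a profile $\mathbf{s}$ defines the directed network with arcs $(u,v)$, $v\in S_u$, of length $d(u,v)$. A greedy path from $u$ to $v$ is a directed path $u=x_1,\dots,x_j=v$ of arcs with $d(x_i,v)>d(x_{i+1},v)$ for all $i$. $\mathrm{stretch}(u,v)$ is the minimum length of a greedy path from $u$ to $v$ divided by $d(u,v)$, or a fixed sufficiently large penalty constant $Z$ if none exists. Cost: $c_u(\mathbf{s})=\sum_{v\ne u}\mathrm{stretch}(u,v)+\alpha|S_u|$. A Greedy Equilibrium is a profile in which no agent can strictly decrease its cost by adding one element to, deleting one element from, or swapping one element of its strategy (others fixed). A Nash equilibrium is a profile in which no agent can strictly decrease its cost by any change of its own strategy; every Nash equilibrium is a Greedy Equilibrium. *)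

theory Defs
  imports Complex_Main
begin

definition plen :: "('a \<Rightarrow> 'a \<Rightarrow> real) \<Rightarrow> 'a list \<Rightarrow> real" where
  "plen w xs = sum_list (map (\<lambda>(a, b). w a b) (zip xs (tl xs)))"

definition tpath :: "('a \<times> 'a) set \<Rightarrow> 'a \<Rightarrow> 'a \<Rightarrow> 'a list \<Rightarrow> bool" where
  "tpath E x y xs \<longleftrightarrow> xs \<noteq> [] \<and> hd xs = x \<and> last xs = y \<and> distinct xs \<and>
     (\<forall>i. Suc i < length xs \<longrightarrow> (xs ! i, xs ! Suc i) \<in> E)"

definition is_spanning_tree :: "'a set \<Rightarrow> ('a \<times> 'a) set \<Rightarrow> bool" where
  "is_spanning_tree P E \<longleftrightarrow> E \<subseteq> P \<times> P \<and> sym E \<and> (\<forall>x. (x, x) \<notin> E) \<and>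
     (\<forall>x\<in>P. \<forall>y\<in>P. \<exists>!xs. tpath E x y xs)"

definition pos_weights :: "('a \<times> 'a) set \<Rightarrow> ('a \<Rightarrow> 'a \<Rightarrow> real) \<Rightarrow> bool" where
  "pos_weights E w \<longleftrightarrow> (\<forall>(x, y)\<in>E. w x y > 0 \<and> w x y = w y x)"

definition tree_dist :: "('a \<times> 'a) set \<Rightarrow> ('a \<Rightarrow> 'a \<Rightarrow> real) \<Rightarrow> 'a \<Rightarrow> 'a \<Rightarrow> real" where
  "tree_dist E w x y = plen w (THE xs. tpath E x y xs)"

definition valid_profile :: "'a set \<Rightarrow> ('a \<Rightarrow> 'a set) \<Rightarrow> bool" where
  "valid_profile P s \<longleftrightarrow> (\<forall>u\<in>P. s u \<subseteq> P - {u})"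

definition greedy_path :: "('a \<Rightarrow> 'a \<Rightarrow> real) \<Rightarrow> ('a \<Rightarrow> 'a set) \<Rightarrow> 'a \<Rightarrow> 'a \<Rightarrow> 'a list \<Rightarrow> bool" where
  "greedy_path d s u v xs \<longleftrightarrow> xs \<noteq> [] \<and> hd xs = u \<and> last xs = v \<and>
     (\<forall>i. Suc i < length xs \<longrightarrow> xs ! Suc i \<in> s (xs ! i) \<and> d (xs ! i) v > d (xs ! Suc i) v)"

definition stretch :: "('a \<Rightarrow> 'a \<Rightarrow> real) \<Rightarrow> real \<Rightarrow> ('a \<Rightarrow> 'a set) \<Rightarrow> 'a \<Rightarrow> 'a \<Rightarrow> real" where
  "stretch d Z s u v =
     (if \<exists>xs. greedy_path d s u v xs
      then Min {plen d xs | xs. greedy_path d s u v xs} / d u v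
      else Z)"

definition cost :: "'a set \<Rightarrow> ('a \<Rightarrow> 'a \<Rightarrow> real) \<Rightarrow> real \<Rightarrow> real \<Rightarrow> ('a \<Rightarrow> 'a set) \<Rightarrow> 'a \<Rightarrow> real" where
  "cost P d Z \<alpha> s u = (\<Sum>v\<in>P - {u}. stretch d Z s u v) + \<alpha> * real (card (s u))"

definition greedy_moves :: "'a set \<Rightarrow> 'a \<Rightarrow> 'a set \<Rightarrow> 'a set set" where
  "greedy_moves P u S =
     {insert v S | v. v \<in> P - {u} - S} \<union>
     {S - {v} | v. v \<in> S} \<union>
     {insert w (S - {v}) | v w. v \<in> S \<and> w \<in> P - {u} - S}"

definition greedy_equilibrium ::
  "'a set \<Rightarrow> ('a \<Rightarrow> 'a \<Rightarrow> real) \<Rightarrow> real \<Rightarrow> real \<Rightarrow> ('a \<Rightarrow> 'a set) \<Rightarrow> bool" where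
  "greedy_equilibrium P d Z \<alpha> s \<longleftrightarrow> valid_profile P s \<and>
     (\<forall>u\<in>P. \<forall>S'\<in>greedy_moves P u (s u). cost P d Z \<alpha> s u \<le> cost P d Z \<alpha> (s(u := S')) u)"

definition nash_equilibrium ::
  "'a set \<Rightarrow> ('a \<Rightarrow> 'a \<Rightarrow> real) \<Rightarrow> real \<Rightarrow> real \<Rightarrow> ('a \<Rightarrow> 'a set) \<Rightarrow> bool" where
  "nash_equilibrium P d Z \<alpha> s \<longleftrightarrow> valid_profile P s \<and>
     (\<forall>u\<in>P. \<forall>S'. S' \<subseteq> P - {u} \<longrightarrow> cost P d Z \<alpha> s u \<le> cost P d Z \<alpha> (s(u := S')) u)"

definition tree_profile :: "'a set \<Rightarrow> ('a \<times> 'a) set \<Rightarrow> 'a \<Rightarrow> 'a set" where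
  "tree_profile P E u = {v \<in> P. (u, v) \<in> E}"

end

theory Submission
  imports Defs
begin

text \<open>
  For a tree edge ux, a point v is strictly closer to x than to u exactly when
  v lies in the branch of T - ux containing x, and then d(u, v) = w(u, x) + d(x, v). Hence, if all
  tree arcs along the tree path from u to v are bought, that path is greedy and has stretch 1, so
  the tree profile gives every agent total stretch n - 1; any greedy path from u towards a tree
  neighbour x must start with an arc into the branch of x.

  The tree profile is a Nash equilibrium: a deviation of u that has no arc into the branch of some
  neighbour x loses x altogether and pays the penalty Z, and one that has such an arc for every
  neighbour buys at least deg(u) arcs.

  Conversely, in a greedy equilibrium every tree arc ux is bought, by induction on the size of the
  branch of x: all tree arcs leading away from u inside that branch have smaller branches, so they
  are present, and if ux were missing, u could buy x (swapping out an arc into the branch of x, if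
  there is one) and route greedily with stretch 1 to x and to the whole branch without harming
  any other stretch. Once all tree arcs are present every stretch is 1, so any further arc can
  be deleted to save \<alpha>.
\<close>

lemma tpath_iff_successively:
  "tpath E x y xs \<longleftrightarrow>
     xs \<noteq> [] \<and> hd xs = x \<and> last xs = y \<and> distinct xs \<and> successively (\<lambda>a b. (a, b) \<in> E) xs"
  unfolding tpath_def successively_conv_nth by blast

lemma greedy_path_iff_successively:
  "greedy_path d s u v xs \<longleftrightarrow>
     xs \<noteq> [] \<and> hd xs = u \<and> last xs = v \<and> successively (\<lambda>a b. b \<in> s a \<and> d b v < d a v) xs"
  unfolding greedy_path_def successively_conv_nth by blast

lemma successively_take: "successively R xs \<Longrightarrow> successively R (take n xs)"
  by (metis append_take_drop_id successively_append_iff)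

lemma plen_Nil [simp]: "plen w [] = 0"
  and plen_singleton [simp]: "plen w [x] = 0"
  and plen_Cons_Cons [simp]: "plen w (x # y # xs) = w x y + plen w (y # xs)"
  by (simp_all add: plen_def)

lemma plen_cong: "successively (\<lambda>a b. f a b = g a b) xs \<Longrightarrow> plen f xs = plen g xs"
  by (induction xs rule: induct_list012) auto

lemma plen_append_Cons: "plen w (xs @ y # ys) = plen w (xs @ [y]) + plen w (y # ys)"
proof (induction xs)
  case (Cons a xs) then show ?case by (cases xs) auto
qed simp

lemma plen_snoc: "plen w (xs @ [y]) = plen w xs + (if xs = [] then 0 else w (last xs) y)"
proof (induction xs)
  case (Cons a xs) then show ?case by (cases xs) auto
qed simp

lemma plen_rev:
  assumes "successively (\<lambda>a b. w a b = w b a) xs"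
  shows "plen w (rev xs) = plen w xs"
  using assms
proof (induction xs)
  case (Cons x xs)
  have "plen w (rev (x # xs)) = plen w xs + (if xs = [] then 0 else w (hd xs) x)"
    using Cons by (auto simp: plen_snoc last_rev successively_Cons)
  also have "\<dots> = plen w (x # xs)"
    using Cons.prems by (cases xs) auto
  finally show ?case .
qed simp

lemma plen_nonneg: "successively (\<lambda>a b. 0 \<le> w a b) xs \<Longrightarrow> 0 \<le> plen w xs"
  by (induction xs rule: induct_list012) auto

lemma sum_mono_remove:
  fixes f g :: "'a \<Rightarrow> real"
  assumes "finite A" "x \<in> A" "\<And>v. v \<in> A \<Longrightarrow> f v \<le> g v"
  shows "(\<Sum>v\<in>A. f v) - f x \<le> (\<Sum>v\<in>A. g v) - g x"
  using sum_mono[of "A - {x}" f g] sum.remove[OF assms(1,2), of f] sum.remove[OF assms(1,2), of g] assms(3)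
  by simp

lemma sorted_wrt_irrefl_distinct: "sorted_wrt R xs \<Longrightarrow> (\<And>x. \<not> R x x) \<Longrightarrow> distinct xs"
  by (induction xs) auto

abbreviation network_walk :: "('a \<Rightarrow> 'a set) \<Rightarrow> 'a list \<Rightarrow> bool" where
  "network_walk s \<equiv> successively (\<lambda>a b. b \<in> s a)"

lemma greedy_path_singleton: "greedy_path d s u v [z] \<longleftrightarrow> z = u \<and> u = v"
  by (auto simp: greedy_path_def)

lemma greedy_path_Cons_Cons:
  "greedy_path d s u v (a # b # ys) \<longleftrightarrow>
     a = u \<and> b \<in> s a \<and> d b v < d a v \<and> greedy_path d s b v (b # ys)"
  by (auto simp: greedy_path_iff_successively)

lemma greedy_path_first_step:
  assumes "greedy_path d s u v xs" "u \<noteq> v"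
  obtains b ys where "xs = u # b # ys" "b \<in> s u" "d b v < d u v" "greedy_path d s b v (b # ys)"
proof -
  obtain a zs where "xs = a # zs"
    using assms(1) by (cases xs) (auto simp: greedy_path_def)
  with assms that show ?thesis
    by (cases zs) (auto simp: greedy_path_singleton greedy_path_Cons_Cons)
qed

lemma greedy_path_distinct:
  assumes "greedy_path d s u v xs"
  shows "distinct xs"
proof -
  have "successively (\<lambda>a b. d b v < d a v) xs"
    using assms by (auto simp: greedy_path_iff_successively elim: successively_mono)
  then have "sorted_wrt (\<lambda>a b. d b v < d a v) xs"
    by (subst (asm) successively_conv_sorted_wrt) (auto intro: transpI)
  then show ?thesis
    by (rule sorted_wrt_irrefl_distinct) simp
qed

lemma greedy_path_fun_upd_other:
  assumes "u \<notin> set xs"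
  shows "greedy_path d (s(u := S)) z v xs \<longleftrightarrow> greedy_path d s z v xs"
proof -
  have "successively (\<lambda>a b. b \<in> (s(u := S)) a \<and> d b v < d a v) xs \<longleftrightarrow>
        successively (\<lambda>a b. b \<in> s a \<and> d b v < d a v) xs"
    using assms by (intro successively_cong) auto
  then show ?thesis
    by (simp only: greedy_path_iff_successively)
qed

lemma network_walk_fun_upd_other:
  "u \<notin> set xs \<Longrightarrow> network_walk (s(u := S)) xs \<longleftrightarrow> network_walk s xs"
  by (intro successively_cong) auto

lemma greedy_path_fun_upd_start:
  assumes "u \<noteq> v" and "\<And>b. d b v < d u v \<Longrightarrow> b \<in> S \<longleftrightarrow> b \<in> s u"
  shows "greedy_path d (s(u := S)) u v xs \<longleftrightarrow> greedy_path d s u v xs"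
proof -
  have restore: "greedy_path d t u v xs"
    if g: "greedy_path d (t(u := T)) u v xs" and kept: "\<And>b. d b v < d u v \<Longrightarrow> b \<in> T \<longleftrightarrow> b \<in> t u"
    for t T
  proof -
    obtain b ys where b: "xs = u # b # ys" "b \<in> T" "d b v < d u v"
        "greedy_path d (t(u := T)) b v (b # ys)"
      using greedy_path_first_step[OF g \<open>u \<noteq> v\<close>] by auto
    have "u \<notin> set (b # ys)"
      using greedy_path_distinct[OF g] b(1) by auto
    then show ?thesis
      using b kept by (simp add: greedy_path_Cons_Cons greedy_path_fun_upd_other)
  qed
  show ?thesis
  proof
    show "greedy_path d (s(u := S)) u v xs \<Longrightarrow> greedy_path d s u v xs"
      using restore assms(2) by blast
    assume "greedy_path d s u v xs"
    then have "greedy_path d ((s(u := S))(u := s u)) u v xs" by simp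
    then show "greedy_path d (s(u := S)) u v xs"
      using restore[of "s(u := S)" "s u"] assms(2) by simp
  qed
qed

lemma greedy_path_subset:
  assumes "greedy_path d s u v xs" "u \<in> A" "\<And>x. x \<in> A \<Longrightarrow> s x \<subseteq> A"
  shows "set xs \<subseteq> A"
  using assms
proof (induction xs arbitrary: u)
  case (Cons a zs)
  show ?case
  proof (cases zs)
    case Nil
    then show ?thesis using Cons.prems by (simp add: greedy_path_singleton)
  next
    case (Cons b ys)
    then have "a = u" "b \<in> s u" "greedy_path d s b v zs"
      using Cons.prems(1) by (auto simp: greedy_path_Cons_Cons)
    moreover have "b \<in> A"
      using \<open>b \<in> s u\<close> Cons.prems(2,3) by blast
    ultimately show ?thesis
      using Cons.IH Cons.prems(2,3) by simp
  qed
qed simp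

lemma stretch_cong:
  "(\<And>xs. greedy_path d s u v xs \<longleftrightarrow> greedy_path d t u v xs) \<Longrightarrow> stretch d Z s u v = stretch d Z t u v"
  by (simp add: stretch_def)

lemma stretch_eq_penalty:
  assumes "u \<noteq> v" "\<And>b. b \<in> s u \<Longrightarrow> d u v \<le> d b v"
  shows "stretch d Z s u v = Z"
proof -
  have "\<not> greedy_path d s u v xs" for xs
  proof
    assume "greedy_path d s u v xs"
    then obtain b where "b \<in> s u" "d b v < d u v"
      using assms(1) by (rule greedy_path_first_step)
    then show False
      using assms(2) by force
  qed
  then show ?thesis by (simp add: stretch_def)
qed

lemma strategy_subset: "valid_profile P s \<Longrightarrow> x \<in> P \<Longrightarrow> s x \<subseteq> P - {x}"
  unfolding valid_profile_def by blast

lemma valid_profile_fun_upd: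
  assumes "valid_profile P s" "S \<subseteq> P - {u}"
  shows "valid_profile P (s(u := S))"
  unfolding valid_profile_def
proof
  fix x assume x: "x \<in> P"
  show "(s(u := S)) x \<subseteq> P - {x}"
  proof (cases "x = u")
    case True
    then show ?thesis using assms(2) by simp
  next
    case False
    then show ?thesis using assms(1) x by (simp add: valid_profile_def)
  qed
qed

lemma greedy_moves_subset: "S \<subseteq> P - {u} \<Longrightarrow> S' \<in> greedy_moves P u S \<Longrightarrow> S' \<subseteq> P - {u}"
  unfolding greedy_moves_def by auto

lemma nash_imp_greedy_equilibrium:
  "nash_equilibrium P d Z \<alpha> s \<Longrightarrow> greedy_equilibrium P d Z \<alpha> s"
  unfolding nash_equilibrium_def greedy_equilibrium_def valid_profile_def
  by (meson greedy_moves_subset)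

lemma greedy_equilibriumD:
  "greedy_equilibrium P d Z \<alpha> s \<Longrightarrow> u \<in> P \<Longrightarrow> S \<in> greedy_moves P u (s u) \<Longrightarrow>
    cost P d Z \<alpha> s u \<le> cost P d Z \<alpha> (s(u := S)) u"
  unfolding greedy_equilibrium_def by blast

section \<open>Stretch in a finite metric space\<close>

locale finite_metric_game =
  fixes P :: "'a set" and d :: "'a \<Rightarrow> 'a \<Rightarrow> real"
  assumes finite_P: "finite P"
    and dist_self: "x \<in> P \<Longrightarrow> d x x = 0"
    and dist_pos: "x \<in> P \<Longrightarrow> y \<in> P \<Longrightarrow> x \<noteq> y \<Longrightarrow> 0 < d x y"
    and dist_triangle: "x \<in> P \<Longrightarrow> y \<in> P \<Longrightarrow> z \<in> P \<Longrightarrow> d x z \<le> d x y + d y z"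
begin

lemma greedy_path_in_P:
  "valid_profile P s \<Longrightarrow> u \<in> P \<Longrightarrow> greedy_path d s u v xs \<Longrightarrow> set xs \<subseteq> P"
  using greedy_path_subset[of d s u v xs P] strategy_subset[of P s] by blast

lemma finite_greedy_paths:
  assumes "valid_profile P s" "u \<in> P"
  shows "finite {xs. greedy_path d s u v xs}"
proof (rule finite_subset)
  show "{xs. greedy_path d s u v xs} \<subseteq> {xs. set xs \<subseteq> P \<and> length xs \<le> card P}"
  proof
    fix xs assume "xs \<in> {xs. greedy_path d s u v xs}"
    then have g: "greedy_path d s u v xs" by simp
    have "set xs \<subseteq> P"
      using greedy_path_in_P[OF assms g] .
    moreover from this have "length xs \<le> card P"
      using greedy_path_distinct[OF g] finite_P by (metis card_mono distinct_card)
    ultimately show "xs \<in> {xs. set xs \<subseteq> P \<and> length xs \<le> card P}" by simp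
  qed
  show "finite {xs. set xs \<subseteq> P \<and> length xs \<le> card P}"
    using finite_P by (rule finite_lists_length_le)
qed

lemma dist_le_plen_greedy_path:
  assumes "valid_profile P s" "u \<in> P" "v \<in> P" "greedy_path d s u v xs"
  shows "d u v \<le> plen d xs"
  using assms(2,4)
proof (induction xs arbitrary: u)
  case (Cons a zs)
  show ?case
  proof (cases zs)
    case Nil
    then show ?thesis using Cons.prems dist_self by (simp add: greedy_path_singleton)
  next
    case (Cons b ys)
    then have "a = u" "b \<in> s u" "greedy_path d s b v zs"
      using Cons.prems(2) by (auto simp: greedy_path_Cons_Cons)
    moreover from this have "b \<in> P"
      using strategy_subset[OF assms(1) Cons.prems(1)] by blast
    ultimately show ?thesis
      using Cons.IH Cons.prems(1) dist_triangle[of u b v] assms(3) \<open>zs = b # ys\<close> by force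
  qed
qed (simp add: greedy_path_def)

lemma stretch_ge_1:
  assumes "valid_profile P s" "u \<in> P" "v \<in> P" "u \<noteq> v" "1 \<le> Z"
  shows "1 \<le> stretch d Z s u v"
proof (cases "\<exists>xs. greedy_path d s u v xs")
  case True
  let ?L = "{plen d xs | xs. greedy_path d s u v xs}"
  have "finite ?L" "?L \<noteq> {}"
    using finite_greedy_paths[OF assms(1,2), of v] True by auto
  then have "d u v \<le> Min ?L"
    using dist_le_plen_greedy_path[OF assms(1-3)] by (auto simp: Min_ge_iff)
  then have "1 \<le> Min ?L / d u v"
    using dist_pos[OF assms(2-4)] by simp
  then show ?thesis
    using True by (simp add: stretch_def)
qed (use assms(5) in \<open>simp add: stretch_def\<close>)

lemma stretch_eq_1:
  assumes "valid_profile P s" "u \<in> P" "v \<in> P" "u \<noteq> v"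
    and "greedy_path d s u v xs" "plen d xs = d u v"
  shows "stretch d Z s u v = 1"
proof -
  let ?L = "{plen d xs | xs. greedy_path d s u v xs}"
  have "Min ?L = d u v"
  proof (rule Min_eqI)
    show "finite ?L"
      using finite_greedy_paths[OF assms(1,2)] by simp
    show "\<And>l. l \<in> ?L \<Longrightarrow> d u v \<le> l"
      using dist_le_plen_greedy_path[OF assms(1-3)] by blast
    show "d u v \<in> ?L"
      using assms(5,6) by force
  qed
  moreover have "d u v \<noteq> 0"
    using dist_pos[OF assms(2-4)] by simp
  ultimately show ?thesis
    using assms(5) by (auto simp: stretch_def)
qed

lemma stretch_gt_1:
  assumes "valid_profile P s" "u \<in> P" "v \<in> P" "u \<noteq> v" "1 < Z"
    and "\<And>xs. greedy_path d s u v xs \<Longrightarrow> d u v < plen d xs"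
  shows "1 < stretch d Z s u v"
proof (cases "\<exists>xs. greedy_path d s u v xs")
  case True
  let ?L = "{plen d xs | xs. greedy_path d s u v xs}"
  have "finite ?L" "?L \<noteq> {}"
    using finite_greedy_paths[OF assms(1,2), of v] True by auto
  then have "Min ?L \<in> ?L"
    by (rule Min_in)
  then have "d u v < Min ?L"
    using assms(6) by auto
  then have "1 < Min ?L / d u v"
    using dist_pos[OF assms(2-4)] by simp
  then show ?thesis
    using True by (simp add: stretch_def)
qed (use assms(5) in \<open>simp add: stretch_def\<close>)

lemma card_le_sum_stretch:
  assumes "valid_profile P s" "u \<in> P" "1 \<le> Z" "A \<subseteq> P - {u}"
  shows "real (card A) \<le> (\<Sum>v\<in>A. stretch d Z s u v)"
proof -
  have "real (card A) = (\<Sum>v\<in>A. 1)" by simp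
  also have "\<dots> \<le> (\<Sum>v\<in>A. stretch d Z s u v)"
    using stretch_ge_1[OF assms(1,2) _ _ assms(3)] assms(4) by (intro sum_mono) auto
  finally show ?thesis .
qed

lemma card_plus_stretch_le_sum_stretch:
  assumes "valid_profile P s" "u \<in> P" "1 \<le> Z" "x \<in> P - {u}"
  shows "real (card (P - {u})) - 1 + stretch d Z s u x \<le> (\<Sum>v\<in>P - {u}. stretch d Z s u v)"
proof -
  have "card (P - {u} - {x}) = card (P - {u}) - 1" "1 \<le> card (P - {u})"
    using assms(4) finite_P by (auto simp: card_gt_0_iff Suc_le_eq)
  then have "real (card (P - {u})) - 1 \<le> (\<Sum>v\<in>P - {u} - {x}. stretch d Z s u v)"
    using card_le_sum_stretch[OF assms(1-3), of "P - {u} - {x}"] by (simp add: of_nat_diff)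
  then show ?thesis
    using sum.remove[of "P - {u}" x "stretch d Z s u"] assms(4) finite_P by simp
qed

end

section \<open>Tree metrics\<close>

locale weighted_tree =
  fixes P :: "'a set" and E :: "('a \<times> 'a) set" and w :: "'a \<Rightarrow> 'a \<Rightarrow> real"
  assumes finite_P: "finite P"
    and spanning_tree: "is_spanning_tree P E"
    and positive_weights: "pos_weights E w"
begin

abbreviation d :: "'a \<Rightarrow> 'a \<Rightarrow> real" where
  "d \<equiv> tree_dist E w"

abbreviation tree_walk :: "'a list \<Rightarrow> bool" where
  "tree_walk \<equiv> successively (\<lambda>a b. (a, b) \<in> E)"

lemma edges_subset: "E \<subseteq> P \<times> P"
  and sym_edges: "sym E"
  and irrefl_edges: "(x, x) \<notin> E"
  and ex1_tpath: "x \<in> P \<Longrightarrow> y \<in> P \<Longrightarrow> \<exists>!xs. tpath E x y xs"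
  using spanning_tree unfolding is_spanning_tree_def by auto

lemma edge_in_P: "(x, y) \<in> E \<Longrightarrow> x \<in> P" "(x, y) \<in> E \<Longrightarrow> y \<in> P"
  using edges_subset by auto

lemma edge_neq: "(x, y) \<in> E \<Longrightarrow> x \<noteq> y"
  using irrefl_edges by auto

lemma weight_pos: "(x, y) \<in> E \<Longrightarrow> 0 < w x y"
  and weight_sym: "(x, y) \<in> E \<Longrightarrow> w x y = w y x"
  using positive_weights unfolding pos_weights_def by auto

lemma tree_walk_in_P: "tree_walk xs \<Longrightarrow> xs \<noteq> [] \<Longrightarrow> hd xs \<in> P \<Longrightarrow> set xs \<subseteq> P"
proof (induction xs)
  case (Cons x xs)
  then show ?case
    by (cases xs) (auto simp: edge_in_P)
qed simp

definition tree_path :: "'a \<Rightarrow> 'a \<Rightarrow> 'a list" where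
  "tree_path x y = (THE xs. tpath E x y xs)"

lemma tpath_tree_path: "x \<in> P \<Longrightarrow> y \<in> P \<Longrightarrow> tpath E x y (tree_path x y)"
  unfolding tree_path_def by (rule theI', rule ex1_tpath)

lemma tree_path_unique: "x \<in> P \<Longrightarrow> y \<in> P \<Longrightarrow> tpath E x y xs \<Longrightarrow> tree_path x y = xs"
  using tpath_tree_path ex1_tpath by blast

lemma dist_eq_plen: "d x y = plen w (tree_path x y)"
  unfolding tree_dist_def tree_path_def ..

lemma tree_path_props:
  assumes "x \<in> P" "y \<in> P"
  shows "tree_path x y \<noteq> []" "hd (tree_path x y) = x" "last (tree_path x y) = y"
    "distinct (tree_path x y)" "tree_walk (tree_path x y)" "set (tree_path x y) \<subseteq> P"
proof -
  show "tree_path x y \<noteq> []" "hd (tree_path x y) = x" "last (tree_path x y) = y"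
    "distinct (tree_path x y)" "tree_walk (tree_path x y)"
    using tpath_tree_path[OF assms] unfolding tpath_iff_successively by auto
  then show "set (tree_path x y) \<subseteq> P"
    using tree_walk_in_P assms(1) by simp
qed

lemma tree_path_self: "x \<in> P \<Longrightarrow> tree_path x x = [x]"
  by (rule tree_path_unique) (auto simp: tpath_iff_successively)

lemma tree_path_edge: "(x, y) \<in> E \<Longrightarrow> tree_path x y = [x, y]"
  by (rule tree_path_unique) (auto simp: tpath_iff_successively edge_in_P edge_neq)

lemma tree_path_rev:
  assumes "x \<in> P" "y \<in> P"
  shows "tree_path y x = rev (tree_path x y)"
proof (rule tree_path_unique[OF assms(2,1)])
  have "tree_walk (rev (tree_path x y))"
    using tree_path_props(5)[OF assms] sym_edges by (auto elim: successively_mono dest: symD)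
  then show "tpath E y x (rev (tree_path x y))"
    using tree_path_props[OF assms] by (simp add: tpath_iff_successively hd_rev last_rev)
qed

lemma tree_path_take:
  assumes "x \<in> P" "y \<in> P" "i < length (tree_path x y)"
  shows "tree_path x (tree_path x y ! i) = take (Suc i) (tree_path x y)"
proof (rule tree_path_unique[OF assms(1)])
  let ?xs = "tree_path x y"
  show "?xs ! i \<in> P"
    using tree_path_props(6)[OF assms(1,2)] assms(3) by (meson nth_mem subsetD)
  have "hd (take (Suc i) ?xs) = x"
    using tree_path_props(1,2)[OF assms(1,2)] by (simp add: hd_conv_nth)
  moreover have "last (take (Suc i) ?xs) = ?xs ! i"
    using assms(3) by (simp add: take_Suc_conv_app_nth)
  ultimately show "tpath E x (?xs ! i) (take (Suc i) ?xs)"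
    using tree_path_props(1,4,5)[OF assms(1,2)] by (simp add: tpath_iff_successively successively_take)
qed

lemma plen_rev_tree_walk: "tree_walk xs \<Longrightarrow> plen w (rev xs) = plen w xs"
  by (rule plen_rev, erule successively_mono) (rule weight_sym)

lemma dist_self: "x \<in> P \<Longrightarrow> d x x = 0"
  by (simp add: dist_eq_plen tree_path_self)

lemma dist_edge: "(x, y) \<in> E \<Longrightarrow> d x y = w x y"
  by (simp add: dist_eq_plen tree_path_edge)

lemma dist_nonneg: "x \<in> P \<Longrightarrow> y \<in> P \<Longrightarrow> 0 \<le> d x y"
  unfolding dist_eq_plen
  by (rule plen_nonneg, rule successively_mono[OF tree_path_props(5)]) (auto dest: weight_pos less_imp_le)

lemma dist_sym: "x \<in> P \<Longrightarrow> y \<in> P \<Longrightarrow> d y x = d x y"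
  unfolding dist_eq_plen tree_path_rev[of x y] by (simp add: plen_rev_tree_walk tree_path_props(5))

definition first_hop :: "'a \<Rightarrow> 'a \<Rightarrow> 'a" where
  "first_hop x y = tree_path x y ! 1"

lemma tree_path_first_hop:
  assumes "u \<in> P" "v \<in> P" "u \<noteq> v"
  shows "tree_path u v = u # tree_path (first_hop u v) v"
    and "(u, first_hop u v) \<in> E" and "first_hop u v \<in> P"
    and "d u v = w u (first_hop u v) + d (first_hop u v) v"
proof -
  obtain z rest where zr: "tree_path u v = u # z # rest"
    using tree_path_props(1-3)[OF assms(1,2)] assms(3)
    by (metis last_ConsL list.collapse)
  then have z: "first_hop u v = z"
    by (simp add: first_hop_def)
  show "(u, first_hop u v) \<in> E"
    using tree_path_props(5)[OF assms(1,2)] zr z by simp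
  then show "first_hop u v \<in> P"
    by (rule edge_in_P)
  have "tpath E z v (z # rest)"
    using tree_path_props[OF assms(1,2)] zr by (auto simp: tpath_iff_successively)
  then have "tree_path z v = z # rest"
    using tree_path_unique \<open>first_hop u v \<in> P\<close> z assms(2) by blast
  then show "tree_path u v = u # tree_path (first_hop u v) v"
    using zr z by simp
  then show "d u v = w u (first_hop u v) + d (first_hop u v) v"
    using \<open>tree_path z v = z # rest\<close> z by (simp add: dist_eq_plen)
qed

lemma first_hop_edge: "(u, x) \<in> E \<Longrightarrow> first_hop u x = x"
  by (simp add: first_hop_def tree_path_edge)

lemma dist_pos: "x \<in> P \<Longrightarrow> y \<in> P \<Longrightarrow> x \<noteq> y \<Longrightarrow> 0 < d x y"
  using tree_path_first_hop(2-4)[of x y] dist_nonneg[of "first_hop x y" y] weight_pos[of x "first_hop x y"]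
  by simp

lemma tree_paths_from_meet_only_at_start:
  assumes "x \<in> P" "a \<in> P" "b \<in> P" "first_hop x a \<noteq> first_hop x b"
  shows "set (tree_path x a) \<inter> set (tree_path x b) \<subseteq> {x}"
proof
  fix q assume q: "q \<in> set (tree_path x a) \<inter> set (tree_path x b)"
  obtain i j where i: "i < length (tree_path x a)" "tree_path x a ! i = q"
    and j: "j < length (tree_path x b)" "tree_path x b ! j = q"
    using q by (meson IntD1 IntD2 in_set_conv_nth)
  have start: "tree_path x a ! 0 = x" "tree_path x b ! 0 = x"
    using tree_path_props(1,2) assms(1-3) by (simp_all add: hd_conv_nth[symmetric])
  show "q \<in> {x}"
  proof (rule ccontr)
    assume "q \<notin> {x}"
    then have "i \<noteq> 0" "j \<noteq> 0"
      using i(2) j(2) start by (metis singletonI)+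
    have "take (Suc i) (tree_path x a) = take (Suc j) (tree_path x b)"
      using tree_path_take[OF assms(1,2) i(1)] tree_path_take[OF assms(1,3) j(1)] i(2) j(2) by simp
    then have "take (Suc i) (tree_path x a) ! 1 = take (Suc j) (tree_path x b) ! 1"
      by simp
    then have "first_hop x a = first_hop x b"
      using \<open>i \<noteq> 0\<close> \<open>j \<noteq> 0\<close> by (simp add: first_hop_def)
    then show False
      using assms(4) by contradiction
  qed
qed

lemma tree_path_via:
  assumes "x \<in> P" "a \<in> P" "b \<in> P" "a \<noteq> x" "b \<noteq> x" "first_hop x a \<noteq> first_hop x b"
  shows "tree_path a b = rev (tree_path x a) @ tl (tree_path x b)"
proof (rule tree_path_unique[OF assms(2,3)])
  let ?A = "tree_path x a" and ?B = "tree_path x b"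
  obtain B' where B: "?B = x # B'" "B' \<noteq> []"
    using tree_path_props(1-3)[OF assms(1,3)] assms(5) by (metis last_ConsL list.collapse)
  have "distinct (rev ?A @ B')"
    using tree_path_props(4)[OF assms(1,2)] tree_path_props(4)[OF assms(1,3)]
      tree_paths_from_meet_only_at_start[OF assms(1-3,6)] B(1) by auto
  moreover have "tree_walk (rev ?A @ B')"
  proof -
    have "tree_walk (rev ?A)"
      using tree_path_props(5)[OF assms(1,2)] sym_edges by (auto elim: successively_mono dest: symD)
    moreover have "tree_walk B'" "(x, hd B') \<in> E"
      using tree_path_props(5)[OF assms(1,3)] B by (auto simp: successively_Cons)
    ultimately show ?thesis
      using tree_path_props(1,2)[OF assms(1,2)] B(2) by (simp add: successively_append_iff last_rev)
  qed
  ultimately show "tpath E a b (rev ?A @ tl ?B)"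
    using tree_path_props(1-3)[OF assms(1,2)] tree_path_props(3)[OF assms(1,3)] B
    by (simp add: tpath_iff_successively hd_rev)
qed

lemma dist_via:
  assumes "x \<in> P" "a \<in> P" "b \<in> P" "a = x \<or> b = x \<or> first_hop x a \<noteq> first_hop x b"
  shows "d a b = d x a + d x b"
proof -
  consider "a = x" | "b = x" | "a \<noteq> x" "b \<noteq> x" "first_hop x a \<noteq> first_hop x b"
    using assms(4) by blast
  then show ?thesis
  proof cases
    case 1
    then show ?thesis using dist_self assms(1) by simp
  next
    case 2
    then show ?thesis using dist_self dist_sym assms(1,2) by simp
  next
    case 3
    obtain A' B' where A: "tree_path x a = x # A'" and B: "tree_path x b = x # B'"
      using tree_path_props(1,2) assms(1-3) by (metis list.collapse)
    have "d a b = plen w (rev A' @ x # B')"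
      using tree_path_via[OF assms(1-3) 3] A B by (simp add: dist_eq_plen)
    also have "\<dots> = plen w (rev A' @ [x]) + plen w (x # B')"
      by (rule plen_append_Cons)
    also have "\<dots> = plen w (rev (tree_path x a)) + plen w (tree_path x b)"
      using A B by simp
    finally show ?thesis
      using tree_path_props(5)[OF assms(1,2)] by (simp add: plen_rev_tree_walk dist_eq_plen)
  qed
qed

lemma dist_from_neighbour:
  assumes "(u, x) \<in> E" "v \<in> P"
  shows "v \<noteq> u \<and> first_hop u v = x \<Longrightarrow> d u v = w u x + d x v"
    and "\<not> (v \<noteq> u \<and> first_hop u v = x) \<Longrightarrow> d x v = w u x + d u v"
proof -
  have u: "u \<in> P" and x: "x \<in> P"
    using assms(1) by (auto dest: edge_in_P)
  show "v \<noteq> u \<and> first_hop u v = x \<Longrightarrow> d u v = w u x + d x v"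
    using tree_path_first_hop(4)[OF u assms(2)] by auto
  assume "\<not> (v \<noteq> u \<and> first_hop u v = x)"
  then have "d x v = d u x + d u v"
    using dist_via[OF u x assms(2)] first_hop_edge[OF assms(1)] by auto
  then show "d x v = w u x + d u v"
    using dist_edge[OF assms(1)] by simp
qed

lemma closer_neighbour_iff:
  assumes "(u, x) \<in> E" "v \<in> P"
  shows "d x v < d u v \<longleftrightarrow> v \<noteq> u \<and> first_hop u v = x"
  using dist_from_neighbour[OF assms] weight_pos[OF assms(1)] by force

lemma first_hop_eq_if_closer:
  assumes "u \<in> P" "z \<in> P" "v \<in> P" "d z v < d u v" "z \<noteq> u" "v \<noteq> u"
  shows "first_hop u z = first_hop u v"
proof (rule ccontr)
  assume "first_hop u z \<noteq> first_hop u v"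
  then have "d z v = d u z + d u v"
    using dist_via[OF assms(1-3)] by blast
  then show False
    using assms(4) dist_nonneg[OF assms(1,2)] by simp
qed

lemma dist_triangle:
  assumes "a \<in> P" "b \<in> P" "c \<in> P"
  shows "d a c \<le> d a b + d b c"
  using assms
proof (induction "length (tree_path a b)" arbitrary: a rule: less_induct)
  case less
  show ?case
  proof (cases "a = b")
    case False
    let ?x = "first_hop a b"
    note hop = tree_path_first_hop[OF less.prems(1,2) False]
    have "d ?x c \<le> d ?x b + d b c"
      using less.hyps hop(1,3) less.prems(2,3) by force
    moreover have "d a c \<le> w a ?x + d ?x c"
      using dist_from_neighbour[OF hop(2) less.prems(3)] weight_pos[OF hop(2)]
      by (cases "c \<noteq> a \<and> first_hop a c = ?x") auto
    ultimately show ?thesis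
      using hop(4) by simp
  qed (use dist_self less.prems in simp)
qed

sublocale finite_metric_game P d
  using finite_P dist_self dist_pos dist_triangle by unfold_locales

lemma dist_increases_along_tree_path:
  assumes "p \<in> P" "q \<in> P" "Suc i < length (tree_path p q)"
  shows "d p (tree_path p q ! i) < d p (tree_path p q ! Suc i)"
proof -
  let ?xs = "tree_path p q"
  have edge: "(?xs ! i, ?xs ! Suc i) \<in> E"
    using successively_nth[OF tree_path_props(5)[OF assms(1,2)] assms(3)] .
  have take: "take (Suc (Suc i)) ?xs = take (Suc i) ?xs @ [?xs ! Suc i]"
    using assms(3) by (rule take_Suc_conv_app_nth)
  have last: "last (take (Suc i) ?xs) = ?xs ! i"
    using assms(3) by (simp add: take_Suc_conv_app_nth)
  have "d p (?xs ! Suc i) = plen w (take (Suc i) ?xs @ [?xs ! Suc i])"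
    using tree_path_take[OF assms] take by (simp add: dist_eq_plen)
  also have "\<dots> = plen w (take (Suc i) ?xs) + w (?xs ! i) (?xs ! Suc i)"
    using last tree_path_props(1)[OF assms(1,2)] by (simp add: plen_snoc)
  also have "plen w (take (Suc i) ?xs) = d p (?xs ! i)"
    using tree_path_take[OF assms(1,2), of i] assms(3) by (simp add: dist_eq_plen)
  finally show ?thesis
    using weight_pos[OF edge] by simp
qed

text \<open>For a tree edge (u, x), branch u x is the vertex set of the component of T - ux
  that contains x.\<close>
definition branch :: "'a \<Rightarrow> 'a \<Rightarrow> 'a set" where
  "branch u x = {c \<in> P. d x c < d u c}"

lemma finite_branch: "finite (branch u x)"
  using finite_P unfolding branch_def by simp

lemma neighbour_in_branch: "(u, x) \<in> E \<Longrightarrow> x \<in> branch u x"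
  using dist_self dist_pos edge_in_P edge_neq unfolding branch_def by fastforce

lemma branch_psubset:
  assumes "(u, x) \<in> E" "(a, b) \<in> E" "a \<in> branch u x" "d a u < d b u"
  shows "branch a b \<subset> branch u x"
proof
  have u: "u \<in> P" and x: "x \<in> P" and a: "a \<in> P" and b: "b \<in> P"
    using assms(1,2) by (auto dest: edge_in_P)
  have au: "d x a < d u a"
    using assms(3) by (simp add: branch_def)
  then have "a \<noteq> u"
    using dist_self[OF u] dist_nonneg[OF x u] by auto
  have "first_hop a u \<noteq> b"
    using closer_neighbour_iff[OF assms(2) u] assms(4) \<open>a \<noteq> u\<close> by auto
  show "branch a b \<subseteq> branch u x"
  proof
    fix c assume "c \<in> branch a b"
    then have c: "c \<in> P" "c \<noteq> a" "first_hop a c = b"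
      using closer_neighbour_iff[OF assms(2)] by (auto simp: branch_def)
    have "d x c \<le> d x a + d a c"
      using dist_triangle[OF x a c(1)] .
    also have "\<dots> < d u a + d a c"
      using au by simp
    also have "\<dots> = d u c"
      using dist_via[OF a u c(1)] c(3) \<open>first_hop a u \<noteq> b\<close> dist_sym[OF a u] by simp
    finally show "c \<in> branch u x"
      using c(1) by (simp add: branch_def)
  qed
  have "a \<notin> branch a b"
    using dist_self[OF a] dist_nonneg[OF b a] by (simp add: branch_def)
  then show "branch a b \<noteq> branch u x"
    using assms(3) by blast
qed

lemma tree_path_into_branch:
  assumes "(u, x) \<in> E" "v \<in> branch u x"
  shows "tree_path u v = u # tree_path x v"
proof -
  have "v \<in> P" "v \<noteq> u" "first_hop u v = x"
    using assms(2) closer_neighbour_iff[OF assms(1)] by (auto simp: branch_def)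
  then show ?thesis
    using tree_path_first_hop(1)[OF edge_in_P(1)[OF assms(1)]] by auto
qed

lemma branch_psubset_along_tree_path:
  assumes "(u, x) \<in> E" "v \<in> branch u x" "Suc i < length (tree_path x v)"
  shows "branch (tree_path x v ! i) (tree_path x v ! Suc i) \<subset> branch u x"
proof -
  let ?T = "tree_path x v"
  let ?a = "?T ! i" and ?b = "?T ! Suc i"
  have u: "u \<in> P" and x: "x \<in> P" and v: "v \<in> P"
    using assms(1,2) by (auto dest: edge_in_P simp: branch_def)
  have U: "tree_path u v = u # ?T"
    by (rule tree_path_into_branch[OF assms(1,2)])
  have len: "Suc (Suc i) < length (tree_path u v)"
    using U assms(3) by simp
  have "(?a, ?b) \<in> E"
    using successively_nth[OF tree_path_props(5)[OF x v] assms(3)] .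
  moreover have "?a \<in> branch u x"
  proof -
    have a: "?a \<in> set ?T"
      using assms(3) by simp
    then have "?a \<in> P"
      using tree_path_props(6)[OF x v] by blast
    have "tree_path u ?a = take (Suc (Suc i)) (u # ?T)"
      using tree_path_take[OF u v, of "Suc i"] len U by simp
    then have "first_hop u ?a = x"
      using tree_path_props(1,2)[OF x v] by (simp add: first_hop_def hd_conv_nth)
    moreover have "?a \<noteq> u"
      using tree_path_props(4)[OF u v] U a by auto
    ultimately show ?thesis
      using closer_neighbour_iff[OF assms(1) \<open>?a \<in> P\<close>] \<open>?a \<in> P\<close> by (simp add: branch_def)
  qed
  moreover have "d ?a u < d ?b u"
  proof -
    have "d u ?a < d u ?b"
      using dist_increases_along_tree_path[OF u v len] U by simp
    moreover have "?a \<in> P" "?b \<in> P"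
      using tree_path_props(6)[OF x v] assms(3) by (auto dest: nth_mem)
    ultimately show ?thesis
      using dist_sym u by simp
  qed
  ultimately show ?thesis
    by (rule branch_psubset[OF assms(1)])
qed

section \<open>The tree profile is a Nash equilibrium\<close>

lemma plen_dist_tree_path:
  assumes "x \<in> P" "v \<in> P"
  shows "plen d (tree_path x v) = d x v"
proof -
  have "plen d (tree_path x v) = plen w (tree_path x v)"
    by (rule plen_cong, rule successively_mono[OF tree_path_props(5)[OF assms]]) (rule dist_edge)
  then show ?thesis
    by (simp add: dist_eq_plen)
qed

lemma greedy_path_tree_path:
  assumes "x \<in> P" "v \<in> P" "network_walk s (tree_path x v)"
  shows "greedy_path d s x v (tree_path x v)"
  using assms
proof (induction "length (tree_path x v)" arbitrary: x rule: less_induct)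
  case less
  show ?case
  proof (cases "x = v")
    case True
    then show ?thesis
      using less.prems(1) by (simp add: tree_path_self greedy_path_singleton)
  next
    case False
    let ?z = "first_hop x v"
    note hop = tree_path_first_hop[OF less.prems(1,2) False]
    obtain rest where rest: "tree_path ?z v = ?z # rest"
      using tree_path_props(1,2)[OF hop(3) less.prems(2)] by (metis list.collapse)
    have "?z \<in> s x" "network_walk s (tree_path ?z v)"
      using less.prems(3) hop(1) rest by simp_all
    moreover from this(2) have "greedy_path d s ?z v (tree_path ?z v)"
      using less.hyps hop(1,3) less.prems(2) by simp
    moreover have "d ?z v < d x v"
      using hop(4) weight_pos[OF hop(2)] by simp
    ultimately show ?thesis
      using hop(1) rest by (simp add: greedy_path_Cons_Cons)
  qed
qed

lemma stretch_eq_1_if_network_walk: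
  assumes "valid_profile P s" "u \<in> P" "v \<in> P" "u \<noteq> v" "network_walk s (tree_path u v)"
  shows "stretch d Z s u v = 1"
  using stretch_eq_1[OF assms(1-4) greedy_path_tree_path[OF assms(2,3,5)]]
    plen_dist_tree_path[OF assms(2,3)] by blast

lemma valid_tree_profile: "valid_profile P (tree_profile P E)"
  unfolding valid_profile_def tree_profile_def using irrefl_edges by auto

lemma stretch_tree_profile:
  assumes "u \<in> P" "v \<in> P" "u \<noteq> v"
  shows "stretch d Z (tree_profile P E) u v = 1"
proof (rule stretch_eq_1_if_network_walk[OF valid_tree_profile assms])
  show "network_walk (tree_profile P E) (tree_path u v)"
    by (rule successively_mono[OF tree_path_props(5)[OF assms(1,2)]])
      (simp add: tree_profile_def edge_in_P)
qed

lemma cost_tree_profile: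
  assumes "u \<in> P"
  shows "cost P d Z \<alpha> (tree_profile P E) u =
    real (card (P - {u})) + \<alpha> * real (card (tree_profile P E u))"
proof -
  have "(\<Sum>v\<in>P - {u}. stretch d Z (tree_profile P E) u v) = (\<Sum>v\<in>P - {u}. 1)"
    using stretch_tree_profile[OF assms] by (intro sum.cong) auto
  then show ?thesis
    by (simp add: cost_def)
qed

lemma card_tree_profile_le:
  assumes "u \<in> P" "S \<subseteq> P - {u}" "\<forall>x. (u, x) \<in> E \<longrightarrow> (\<exists>z\<in>S. d z x < d u x)"
  shows "card (tree_profile P E u) \<le> card S"
proof -
  have "finite S"
    using assms(2) finite_P finite_subset by blast
  have "tree_profile P E u \<subseteq> first_hop u ` S"
  proof
    fix x assume "x \<in> tree_profile P E u"
    then have ux: "(u, x) \<in> E"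
      by (simp add: tree_profile_def)
    then obtain z where z: "z \<in> S" "d z x < d u x"
      using assms(3) by blast
    then have "first_hop u z = first_hop u x"
      using first_hop_eq_if_closer[OF assms(1)] assms(2) ux by (auto dest: edge_in_P edge_neq)
    then show "x \<in> first_hop u ` S"
      using z(1) first_hop_edge[OF ux] by force
  qed
  then have "card (tree_profile P E u) \<le> card (first_hop u ` S)"
    using \<open>finite S\<close> by (simp add: card_mono)
  also have "\<dots> \<le> card S"
    using \<open>finite S\<close> by (rule card_image_le)
  finally show ?thesis .
qed

text \<open>Either every tree neighbour x of u is approached by some arc of the deviation, which then
  needs at least deg(u) arcs, or some neighbour is unreachable and costs the penalty Z.\<close>
lemma tree_profile_best_response:
  assumes "u \<in> P" "S \<subseteq> P - {u}" "1 + \<alpha> * real (card P) \<le> Z" "0 \<le> \<alpha>"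
  shows "cost P d Z \<alpha> (tree_profile P E) u \<le> cost P d Z \<alpha> ((tree_profile P E)(u := S)) u"
proof -
  let ?s = "tree_profile P E" let ?t = "?s(u := S)"
  have valid: "valid_profile P ?t"
    using valid_tree_profile assms(2) by (rule valid_profile_fun_upd)
  have "0 \<le> \<alpha> * real (card P)"
    using assms(4) by simp
  then have "1 \<le> Z"
    using assms(3) by linarith
  have cost_t: "cost P d Z \<alpha> ?t u = (\<Sum>v\<in>P - {u}. stretch d Z ?t u v) + \<alpha> * real (card S)"
    by (simp add: cost_def)
  have deg: "card (?s u) \<le> card P"
    using finite_P by (simp add: tree_profile_def card_mono)
  show ?thesis
  proof (cases "\<forall>x. (u, x) \<in> E \<longrightarrow> (\<exists>z\<in>S. d z x < d u x)")
    case True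
    then have "\<alpha> * real (card (?s u)) \<le> \<alpha> * real (card S)"
      using card_tree_profile_le[OF assms(1,2)] assms(4) by (simp add: mult_left_mono)
    then show ?thesis
      using card_le_sum_stretch[OF valid assms(1) \<open>1 \<le> Z\<close> subset_refl]
      unfolding cost_tree_profile[OF assms(1)] cost_t by linarith
  next
    case False
    then obtain x where ux: "(u, x) \<in> E" and "\<forall>z\<in>S. d u x \<le> d z x"
      by (auto simp: not_less)
    then have "stretch d Z ?t u x = Z"
      by (intro stretch_eq_penalty) (auto dest: edge_neq)
    moreover have x: "x \<in> P - {u}"
      using ux by (auto dest: edge_in_P edge_neq)
    moreover have "\<alpha> * real (card (?s u)) \<le> \<alpha> * real (card P)"
      using deg assms(4) by (simp add: mult_left_mono)
    moreover have "0 \<le> \<alpha> * real (card S)"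
      using assms(4) by simp
    ultimately show ?thesis
      using card_plus_stretch_le_sum_stretch[OF valid assms(1) \<open>1 \<le> Z\<close> x] assms(3)
      unfolding cost_tree_profile[OF assms(1)] cost_t by linarith
  qed
qed

lemma nash_tree_profile:
  assumes "1 + \<alpha> * real (card P) \<le> Z" "0 \<le> \<alpha>"
  shows "nash_equilibrium P d Z \<alpha> (tree_profile P E)"
  unfolding nash_equilibrium_def
  using valid_tree_profile tree_profile_best_response[OF _ _ assms] by blast

section \<open>Every greedy equilibrium is the tree profile\<close>

lemma stretch_eq_1_after_buying_tree_arc:
  assumes "valid_profile P s" "(u, x) \<in> E" "S \<subseteq> P - {u}" "x \<in> S"
    and "v \<in> branch u x" "network_walk s (tree_path x v)"
  shows "stretch d Z (s(u := S)) u v = 1"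
proof (rule stretch_eq_1_if_network_walk)
  have u: "u \<in> P" and v: "v \<in> P"
    using assms(2,5) by (auto dest: edge_in_P simp: branch_def)
  show "valid_profile P (s(u := S))"
    using assms(1,3) by (rule valid_profile_fun_upd)
  have path: "tree_path u v = u # tree_path x v"
    by (rule tree_path_into_branch[OF assms(2,5)])
  then have "u \<notin> set (tree_path x v)"
    using tree_path_props(4)[OF u v] by simp
  then have "network_walk (s(u := S)) (tree_path x v)"
    using assms(6) by (subst network_walk_fun_upd_other)
  then show "network_walk (s(u := S)) (tree_path u v)"
    using path assms(4) tree_path_props(1,2)[OF edge_in_P(2)[OF assms(2)] v]
    by (simp add: successively_Cons)
  show "u \<in> P" "v \<in> P"
    using u v by simp_all
  show "u \<noteq> v"
    using assms(5) closer_neighbour_iff[OF assms(2) v] by (auto simp: branch_def)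
qed

text \<open>Outside the branch of x, a first step of a greedy path from u cannot lead into that
  branch, so it uses the same arcs before and after the move.\<close>
lemma stretch_unchanged_after_buying_tree_arc:
  assumes "valid_profile P s" "(u, x) \<in> E" "S \<subseteq> P - {u}"
    and "S - {x} \<subseteq> s u" "\<forall>z\<in>s u - S. first_hop u z = x"
    and "v \<in> P" "v \<noteq> u" "v \<notin> branch u x"
  shows "stretch d Z (s(u := S)) u v = stretch d Z s u v"
proof (intro stretch_cong greedy_path_fun_upd_start)
  show "u \<noteq> v"
    using assms(7) by simp
  have u: "u \<in> P"
    using assms(2) by (rule edge_in_P)
  have far: "\<not> d x v < d u v"
    using assms(6,8) by (simp add: branch_def)
  then have "first_hop u v \<noteq> x"
    using closer_neighbour_iff[OF assms(2,6)] assms(7) by simp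
  fix b assume closer: "d b v < d u v"
  have "b \<notin> s u - S"
  proof
    assume b: "b \<in> s u - S"
    then have "b \<in> P" "b \<noteq> u"
      using strategy_subset[OF assms(1) u] by auto
    then have "first_hop u b = first_hop u v"
      using first_hop_eq_if_closer[OF u _ assms(6) closer _ assms(7)] by blast
    then show False
      using b assms(5) \<open>first_hop u v \<noteq> x\<close> by auto
  qed
  moreover have "b \<noteq> x"
    using closer far by auto
  ultimately show "b \<in> S \<longleftrightarrow> b \<in> s u"
    using assms(3,4) strategy_subset[OF assms(1) u] by blast
qed

text \<open>A greedy path from u to a missing tree neighbour x starts with an arc to some b
  behind x, so it overshoots x and returns: its length is at least d u x + 2 d x b.\<close>
lemma stretch_gt_1_if_tree_arc_missing:
  assumes "valid_profile P s" "(u, x) \<in> E" "x \<notin> s u" "1 < Z"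
  shows "1 < stretch d Z s u x"
proof -
  have u: "u \<in> P" and x: "x \<in> P" and "u \<noteq> x"
    using assms(2) by (auto dest: edge_in_P edge_neq)
  show ?thesis
  proof (rule stretch_gt_1[OF assms(1) u x \<open>u \<noteq> x\<close> assms(4)])
    fix xs assume g: "greedy_path d s u x xs"
    obtain b ys where b: "xs = u # b # ys" "b \<in> s u" "d b x < d u x"
        "greedy_path d s b x (b # ys)"
      using g \<open>u \<noteq> x\<close> by (rule greedy_path_first_step)
    have bP: "b \<in> P" "b \<noteq> u"
      using b(2) strategy_subset[OF assms(1) u] by auto
    have "b \<noteq> x"
      using b(2) assms(3) by auto
    have "first_hop u b = x"
      using first_hop_eq_if_closer[OF u bP(1) x b(3) bP(2)] \<open>u \<noteq> x\<close> first_hop_edge[OF assms(2)]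
      by simp
    then have "d u b = w u x + d x b"
      using dist_from_neighbour(1)[OF assms(2) bP(1)] bP(2) by simp
    moreover have "d b x \<le> plen d (b # ys)"
      using dist_le_plen_greedy_path[OF assms(1) bP(1) x b(4)] .
    moreover have "0 < d x b" "d b x = d x b"
      using dist_pos[OF x bP(1)] dist_sym[OF x bP(1)] \<open>b \<noteq> x\<close> by auto
    ultimately show "d u x < plen d xs"
      using b(1) dist_edge[OF assms(2)] by simp
  qed
qed

lemma cost_after_buying_tree_arc:
  assumes "valid_profile P s" "(u, x) \<in> E" "S \<subseteq> P - {u}" "x \<in> S"
    and "S - {x} \<subseteq> s u" "\<forall>z\<in>s u - S. first_hop u z = x"
    and "\<forall>v\<in>branch u x. network_walk s (tree_path x v)" and "1 \<le> Z"
  shows "cost P d Z \<alpha> (s(u := S)) u - \<alpha> * real (card S)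
    \<le> cost P d Z \<alpha> s u - \<alpha> * real (card (s u)) - stretch d Z s u x + 1"
proof -
  let ?t = "s(u := S)"
  have u: "u \<in> P" and x: "x \<in> P" and "u \<noteq> x"
    using assms(2) by (auto dest: edge_in_P edge_neq)
  have one: "stretch d Z ?t u v = 1" if "v \<in> branch u x" for v
    using stretch_eq_1_after_buying_tree_arc[OF assms(1-4) that] assms(7) that by simp
  have le: "stretch d Z ?t u v \<le> stretch d Z s u v" if v: "v \<in> P - {u}" for v
  proof (cases "v \<in> branch u x")
    case True
    have "1 \<le> stretch d Z s u v"
      using stretch_ge_1[OF assms(1) u _ _ assms(8), of v] v by auto
    then show ?thesis
      using one[OF True] by simp
  next
    case False
    then show ?thesis
      using stretch_unchanged_after_buying_tree_arc[OF assms(1-3,5,6)] v by simp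
  qed
  have "stretch d Z ?t u x = 1"
    using one neighbour_in_branch[OF assms(2)] by blast
  moreover have "(\<Sum>v\<in>P - {u}. stretch d Z ?t u v) - stretch d Z ?t u x
      \<le> (\<Sum>v\<in>P - {u}. stretch d Z s u v) - stretch d Z s u x"
    using finite_P x \<open>u \<noteq> x\<close> le by (intro sum_mono_remove) auto
  ultimately have "(\<Sum>v\<in>P - {u}. stretch d Z ?t u v) - 1
      \<le> (\<Sum>v\<in>P - {u}. stretch d Z s u v) - stretch d Z s u x"
    by simp
  then show ?thesis
    by (simp add: cost_def)
qed

text \<open>If some arc of u already leads into the branch of x it is swapped for x, which lowers the
  stretch to x below its previous value; otherwise x is unreachable and buying it saves Z - 1 - \<alpha>.\<close>
lemma improving_move_if_tree_arc_missing:
  assumes "valid_profile P s" "(u, x) \<in> E" "x \<notin> s u"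
    and "\<forall>v\<in>branch u x. network_walk s (tree_path x v)" and "0 \<le> \<alpha>" "1 + \<alpha> < Z"
  shows "\<exists>S\<in>greedy_moves P u (s u). cost P d Z \<alpha> (s(u := S)) u < cost P d Z \<alpha> s u"
proof -
  have u: "u \<in> P" and x: "x \<in> P" and "u \<noteq> x"
    using assms(2) by (auto dest: edge_in_P edge_neq)
  have su: "s u \<subseteq> P - {u}"
    using strategy_subset[OF assms(1) u] .
  then have "finite (s u)"
    using finite_P finite_subset by blast
  have "1 \<le> Z" "1 < Z"
    using assms(5,6) by simp_all
  show ?thesis
  proof (cases "\<exists>y\<in>s u. d y x < d u x")
    case True
    then obtain y where y: "y \<in> s u" "d y x < d u x"
      by blast
    let ?S = "insert x (s u - {y})"
    have "first_hop u y = x"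
      using first_hop_eq_if_closer[OF u _ x y(2)] y(1) su \<open>u \<noteq> x\<close> first_hop_edge[OF assms(2)]
      by auto
    then have "cost P d Z \<alpha> (s(u := ?S)) u - \<alpha> * real (card ?S)
        \<le> cost P d Z \<alpha> s u - \<alpha> * real (card (s u)) - stretch d Z s u x + 1"
      using su x \<open>u \<noteq> x\<close> by (intro cost_after_buying_tree_arc[OF assms(1,2) _ _ _ _ assms(4) \<open>1 \<le> Z\<close>]) auto
    moreover have "card ?S = card (s u)"
      using \<open>finite (s u)\<close> y(1) assms(3) card_gt_0_iff[of "s u"] by auto
    moreover have "?S \<in> greedy_moves P u (s u)"
      using y(1) x \<open>u \<noteq> x\<close> assms(3) unfolding greedy_moves_def by blast
    ultimately show ?thesis
      using stretch_gt_1_if_tree_arc_missing[OF assms(1-3) \<open>1 < Z\<close>] by force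
  next
    case False
    let ?S = "insert x (s u)"
    have "cost P d Z \<alpha> (s(u := ?S)) u - \<alpha> * real (card ?S)
        \<le> cost P d Z \<alpha> s u - \<alpha> * real (card (s u)) - stretch d Z s u x + 1"
      using su x \<open>u \<noteq> x\<close> by (intro cost_after_buying_tree_arc[OF assms(1,2) _ _ _ _ assms(4) \<open>1 \<le> Z\<close>]) auto
    moreover have "stretch d Z s u x = Z"
      using False \<open>u \<noteq> x\<close> by (intro stretch_eq_penalty) (auto simp: not_less)
    moreover have "card ?S = card (s u) + 1"
      using \<open>finite (s u)\<close> assms(3) by simp
    moreover have "?S \<in> greedy_moves P u (s u)"
      using x \<open>u \<noteq> x\<close> assms(3) unfolding greedy_moves_def by blast
    ultimately show ?thesis
      using assms(6) by (intro bexI[of _ ?S]) (simp_all add: algebra_simps)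
  qed
qed

lemma tree_arc_in_greedy_equilibrium:
  assumes "greedy_equilibrium P d Z \<alpha> s" "0 \<le> \<alpha>" "1 + \<alpha> < Z" "(u, x) \<in> E"
  shows "x \<in> s u"
  using assms(4)
proof (induction "card (branch u x)" arbitrary: u x rule: less_induct)
  case less
  have valid: "valid_profile P s"
    using assms(1) by (simp add: greedy_equilibrium_def)
  have "network_walk s (tree_path x v)" if "v \<in> branch u x" for v
    unfolding successively_conv_nth
  proof (intro allI impI)
    fix i assume i: "Suc i < length (tree_path x v)"
    have "v \<in> P"
      using that by (simp add: branch_def)
    have "card (branch (tree_path x v ! i) (tree_path x v ! Suc i)) < card (branch u x)"
      using finite_branch branch_psubset_along_tree_path[OF less.prems that i] by (rule psubset_card_mono)
    moreover have "(tree_path x v ! i, tree_path x v ! Suc i) \<in> E"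
      using successively_nth[OF tree_path_props(5)[OF edge_in_P(2)[OF less.prems] \<open>v \<in> P\<close>] i] .
    ultimately show "tree_path x v ! Suc i \<in> s (tree_path x v ! i)"
      by (rule less.hyps)
  qed
  then show "x \<in> s u"
    using improving_move_if_tree_arc_missing[OF valid less.prems _ _ assms(2,3)]
      greedy_equilibriumD[OF assms(1) edge_in_P(1)[OF less.prems]] by force
qed

lemma improving_move_if_non_tree_arc:
  assumes "valid_profile P s" "\<forall>(a, b)\<in>E. b \<in> s a" "u \<in> P" "z \<in> s u" "(u, z) \<notin> E"
    and "0 < \<alpha>" "1 \<le> Z"
  shows "cost P d Z \<alpha> (s(u := s u - {z})) u < cost P d Z \<alpha> s u"
proof -
  let ?t = "s(u := s u - {z})"
  have valid: "valid_profile P ?t"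
    using assms(1) strategy_subset[OF assms(1,3)] by (intro valid_profile_fun_upd) auto
  have "network_walk ?t (tree_path u v)" if "v \<in> P" for v
    by (rule successively_mono[OF tree_path_props(5)[OF assms(3) that]]) (use assms(2,5) in auto)
  then have "stretch d Z ?t u v = 1" if "v \<in> P - {u}" for v
    using stretch_eq_1_if_network_walk[OF valid assms(3)] that by auto
  then have "(\<Sum>v\<in>P - {u}. stretch d Z ?t u v) \<le> (\<Sum>v\<in>P - {u}. stretch d Z s u v)"
    using card_le_sum_stretch[OF assms(1,3,7) subset_refl] by simp
  moreover have "card (s u - {z}) < card (s u)"
    using assms(4) strategy_subset[OF assms(1,3)] finite_P finite_subset
    by (intro card_Diff1_less) blast+
  with assms(6) have "\<alpha> * real (card (s u - {z})) < \<alpha> * real (card (s u))"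
    by simp
  ultimately show ?thesis
    by (simp add: cost_def)
qed

lemma greedy_equilibrium_unique:
  assumes "greedy_equilibrium P d Z \<alpha> s" "0 < \<alpha>" "1 + \<alpha> < Z" "u \<in> P"
  shows "s u = tree_profile P E u"
proof
  have valid: "valid_profile P s"
    using assms(1) by (simp add: greedy_equilibrium_def)
  have arcs: "\<forall>(a, b)\<in>E. b \<in> s a"
    using tree_arc_in_greedy_equilibrium[OF assms(1) _ assms(3)] assms(2) by auto
  then show "tree_profile P E u \<subseteq> s u"
    by (auto simp: tree_profile_def)
  show "s u \<subseteq> tree_profile P E u"
  proof
    fix z assume z: "z \<in> s u"
    have "z \<in> P"
      using z strategy_subset[OF valid assms(4)] by blast
    moreover have "(u, z) \<in> E"
    proof (rule ccontr)
      assume "(u, z) \<notin> E"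
      have "1 \<le> Z"
        using assms(2,3) by simp
      have "s u - {z} \<in> greedy_moves P u (s u)"
        using z unfolding greedy_moves_def by blast
      then show False
        using improving_move_if_non_tree_arc[OF valid arcs assms(4) z \<open>(u, z) \<notin> E\<close> assms(2) \<open>1 \<le> Z\<close>]
          greedy_equilibriumD[OF assms(1,4)] by fastforce
    qed
    ultimately show "z \<in> tree_profile P E u"
      by (simp add: tree_profile_def)
  qed
qed

end

theorem theorem3p4:
  fixes P :: "'a set" and E :: "('a \<times> 'a) set" and w :: "'a \<Rightarrow> 'a \<Rightarrow> real" and \<alpha> :: real
  assumes "finite P"
    and "is_spanning_tree P E"
    and "pos_weights E w"
    and "\<alpha> > 0"
  shows "\<exists>Z0. \<forall>Z \<ge> Z0.
    greedy_equilibrium P (tree_dist E w) Z \<alpha> (tree_profile P E) \<and>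
    (\<forall>s. greedy_equilibrium P (tree_dist E w) Z \<alpha> s \<longrightarrow> (\<forall>u\<in>P. s u = tree_profile P E u)) \<and>
    nash_equilibrium P (tree_dist E w) Z \<alpha> (tree_profile P E) \<and>
    (\<forall>s. nash_equilibrium P (tree_dist E w) Z \<alpha> s \<longrightarrow> (\<forall>u\<in>P. s u = tree_profile P E u))"
proof (intro exI allI impI)
  interpret weighted_tree P E w
    using assms(1-3) by unfold_locales
  fix Z assume Z: "(1 + \<alpha> * real (card P)) + (1 + \<alpha>) \<le> Z"
  have "0 \<le> \<alpha> * real (card P)"
    using assms(4) by simp
  then have "1 + \<alpha> * real (card P) \<le> Z" "1 + \<alpha> < Z"
    using Z assms(4) by linarith+
  then have nash: "nash_equilibrium P (tree_dist E w) Z \<alpha> (tree_profile P E)"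
    using nash_tree_profile assms(4) by simp
  have unique: "\<forall>u\<in>P. s u = tree_profile P E u"
    if "greedy_equilibrium P (tree_dist E w) Z \<alpha> s" for s
    using greedy_equilibrium_unique[OF that assms(4) \<open>1 + \<alpha> < Z\<close>] by blast
  show "greedy_equilibrium P (tree_dist E w) Z \<alpha> (tree_profile P E) \<and>
    (\<forall>s. greedy_equilibrium P (tree_dist E w) Z \<alpha> s \<longrightarrow> (\<forall>u\<in>P. s u = tree_profile P E u)) \<and>
    nash_equilibrium P (tree_dist E w) Z \<alpha> (tree_profile P E) \<and>
    (\<forall>s. nash_equilibrium P (tree_dist E w) Z \<alpha> s \<longrightarrow> (\<forall>u\<in>P. s u = tree_profile P E u))"
    using nash unique nash_imp_greedy_equilibrium[of P "tree_dist E w" Z \<alpha>] by blast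
qed

end
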